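(* In the discrete-time setting described in the context, let $X:=\prod_{k=0}^NX_k\times\prod_{k=0}^{N-1}(L^2_{\mathcal F_k})^m$. For every $(x,u)\in X$ and $\delta\in\prod_{k=0}^NX_k$ there exists a unique $z\in\prod_{k=0}^NX_k$ such that $Dg(x,u)(z,0)=\delta$. Moreover there exists $c>0$, independent of $(x,u,z,\delta)$, such that $\sum_{k=0}^N\|z_k\|_{X_k}\le c\sum_{k=0}^N\|\delta_k\|_{X_k}$. In particular, for every closed set $\mathcal V\subseteq\prod_{k=0}^{N-1}(L^2_{\mathcal F_k})^m$, $$d\Big((x,u),\,g^{-1}(y)\cap\Big(\prod_{k=0}^NX_k\times\mathcal V\Big)\Big)\le c\,\|g(x,u)-y\|\quad\forall x,y\in\prod_{k=0}^NX_k,\ u\in\mathcal V.$$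
   Context: $(\Omega,\mathcal F,\mathbb P)$ is a probability space; $w_1,\dots,w_N$ are independent $\mathbb R^d$-valued random variables with independent coordinates, $\mathbb E(w_k^i)=0$, $\mathbb E|w_k^i|^2=1$; $w_0:=0$, $\mathcal F_k=\sigma(w_0,\dots,w_k)$, $L^2_{\mathcal F_k}$ the $\mathcal F_k$-measurable square-integrable random variables. $X_0=\mathbb R^n$, $X_k=\{y^0+\sum_{i=1}^dy^iw_k^i:y^i\in(L^2_{\mathcal F_{k-1}})^n\}$ ($k\ge1$) with $\|x\|_{X_k}^2=\mathbb E|x|^2$; products carry the sum of the norms ($\|y\|=\sum_k\|y_k\|_{X_k}$ on $\prod X_k$), and $d$ is the distance in $X$. $b:\{0,\dots,N-1\}\times\mathbb R^n\times\mathbb R^m\to\mathbb R^n$ and $\sigma:\{0,\dots,N-1\}\times\mathbb R^n\times\mathbb R^m\to\mathbb R^{n\times d}$ (columns $\sigma^i$) are Borel, $C^1$ in $(x,u)$, with $|\psi(k,x,u)|\le c_1(1+|x|+|u|)$ and $|\psi_x|+|\psi_u|\le c_1$ for $\psi\in\{b,\sigma^i\}$. With $\hat x_0\in\mathbb R^n$, $g:X\to\prod_kX_k$ is $g_0(x,u)=\hat x_0-x_0$, $g_{k+1}(x,u)=b(k,x_k,u_k)+\sigma(k,x_k,u_k)w_{k+1}-x_{k+1}$; its Gâteaux derivative is $Dg_0(x,u)(z,v)=-z_0$, $Dg_{k+1}(x,u)(z,v)=b_x z_k+b_uv_k+\sum_i(\sigma^i_xz_k+\sigma^i_uv_k)w_{k+1}^i-z_{k+1}$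 (derivatives evaluated at $(k,x_k,u_k)$). *)

theory Defs
  imports "HOL-Probability.Probability"
begin

text \<open>Filtration F_k = sigma(w_0,...,w_k) with w_0 = 0, as a sigma-algebra on the sample space.\<close>
definition filt :: "'a measure \<Rightarrow> (nat \<Rightarrow> 'a \<Rightarrow> real^'d) \<Rightarrow> nat \<Rightarrow> 'a measure" where
  "filt M w k = sigma (space M) (\<Union>j\<in>{1..k}. {w j -` A \<inter> space M | A. A \<in> sets borel})"

definition L2F :: "'a measure \<Rightarrow> (nat \<Rightarrow> 'a \<Rightarrow> real^'d) \<Rightarrow> nat \<Rightarrow> ('a \<Rightarrow> 'v::euclidean_space) set" where
  "L2F M w k = {f. f \<in> borel_measurable (filt M w k) \<and> integrable M (\<lambda>\<omega>. (norm (f \<omega>))\<^sup>2)}"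

text \<open>The spaces X_k; X_0 = R^n realised as the deterministic (constant) random vectors.\<close>
definition Xsp :: "'a measure \<Rightarrow> (nat \<Rightarrow> 'a \<Rightarrow> real^'d) \<Rightarrow> nat \<Rightarrow> ('a \<Rightarrow> 'v::euclidean_space) set" where
  "Xsp M w k = (if k = 0 then {\<lambda>\<omega>. c | c. True}
     else {\<lambda>\<omega>. y0 \<omega> + (\<Sum>i\<in>UNIV. (w k \<omega> $ i) *\<^sub>R yi i \<omega>) | y0 yi.
             y0 \<in> L2F M w (k - 1) \<and> (\<forall>i. yi i \<in> L2F M w (k - 1))})"

definition nrm :: "'a measure \<Rightarrow> ('a \<Rightarrow> 'v::real_normed_vector) \<Rightarrow> real" where
  "nrm M f = sqrt (\<integral>\<omega>. (norm (f \<omega>))\<^sup>2 \<partial>M)"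

definition nX :: "'a measure \<Rightarrow> nat \<Rightarrow> (nat \<Rightarrow> 'a \<Rightarrow> 'v::real_normed_vector) \<Rightarrow> real" where
  "nX M N x = (\<Sum>k\<le>N. nrm M (x k))"

definition nU :: "'a measure \<Rightarrow> nat \<Rightarrow> (nat \<Rightarrow> 'a \<Rightarrow> 'v::real_normed_vector) \<Rightarrow> real" where
  "nU M N u = (\<Sum>k<N. nrm M (u k))"

definition prodX :: "'a measure \<Rightarrow> (nat \<Rightarrow> 'a \<Rightarrow> real^'d) \<Rightarrow> nat \<Rightarrow> (nat \<Rightarrow> 'a \<Rightarrow> 'v::euclidean_space) set" where
  "prodX M w N = {x. \<forall>k\<le>N. x k \<in> Xsp M w k}"

definition prodU :: "'a measure \<Rightarrow> (nat \<Rightarrow> 'a \<Rightarrow> real^'d) \<Rightarrow> nat \<Rightarrow> (nat \<Rightarrow> 'a \<Rightarrow> 'v::euclidean_space) set" where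
  "prodU M w N = {u. \<forall>k<N. u k \<in> L2F M w k}"

definition distX :: "'a measure \<Rightarrow> nat \<Rightarrow> (nat \<Rightarrow> 'a \<Rightarrow> 'v::real_normed_vector) \<times> (nat \<Rightarrow> 'a \<Rightarrow> 'w::real_normed_vector)
     \<Rightarrow> ((nat \<Rightarrow> 'a \<Rightarrow> 'v) \<times> (nat \<Rightarrow> 'a \<Rightarrow> 'w)) set \<Rightarrow> real" where
  "distX M N p S = Inf ((\<lambda>q. nX M N (fst p - fst q) + nU M N (snd p - snd q)) ` S)"

definition closedU :: "'a measure \<Rightarrow> (nat \<Rightarrow> 'a \<Rightarrow> real^'d) \<Rightarrow> nat \<Rightarrow> (nat \<Rightarrow> 'a \<Rightarrow> 'v::euclidean_space) set \<Rightarrow> bool" where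
  "closedU M w N V \<longleftrightarrow> (\<forall>us u. (\<forall>j. us j \<in> V) \<and> u \<in> prodU M w N \<and> (\<lambda>j. nU M N (us j - u)) \<longlonglongrightarrow> 0 \<longrightarrow> u \<in> V)"

text \<open>The constraint map g.  sig k x u i is the i-th column sigma^i(k,x,u).\<close>
definition gmap :: "(nat \<Rightarrow> 'a \<Rightarrow> real^'d) \<Rightarrow> real^'n
     \<Rightarrow> (nat \<Rightarrow> real^'n \<Rightarrow> real^'m \<Rightarrow> real^'n) \<Rightarrow> (nat \<Rightarrow> real^'n \<Rightarrow> real^'m \<Rightarrow> 'd \<Rightarrow> real^'n)
     \<Rightarrow> (nat \<Rightarrow> 'a \<Rightarrow> real^'n) \<Rightarrow> (nat \<Rightarrow> 'a \<Rightarrow> real^'m) \<Rightarrow> nat \<Rightarrow> 'a \<Rightarrow> real^'n" where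
  "gmap w x0 b sig x u = (\<lambda>k \<omega>. if k = 0 then x0 - x 0 \<omega>
     else b (k - 1) (x (k - 1) \<omega>) (u (k - 1) \<omega>)
          + (\<Sum>i\<in>UNIV. (w k \<omega> $ i) *\<^sub>R sig (k - 1) (x (k - 1) \<omega>) (u (k - 1) \<omega>) i) - x k \<omega>)"

text \<open>Its Gateaux derivative Dg(x,u)(z,v), with bx, bu, sx, su the partial derivatives.\<close>
definition Dg :: "(nat \<Rightarrow> 'a \<Rightarrow> real^'d)
     \<Rightarrow> (nat \<Rightarrow> real^'n \<Rightarrow> real^'m \<Rightarrow> (real^'n) \<Rightarrow>\<^sub>L (real^'n)) \<Rightarrow> (nat \<Rightarrow> real^'n \<Rightarrow> real^'m \<Rightarrow> (real^'m) \<Rightarrow>\<^sub>L (real^'n))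
     \<Rightarrow> (nat \<Rightarrow> real^'n \<Rightarrow> real^'m \<Rightarrow> 'd \<Rightarrow> (real^'n) \<Rightarrow>\<^sub>L (real^'n)) \<Rightarrow> (nat \<Rightarrow> real^'n \<Rightarrow> real^'m \<Rightarrow> 'd \<Rightarrow> (real^'m) \<Rightarrow>\<^sub>L (real^'n))
     \<Rightarrow> (nat \<Rightarrow> 'a \<Rightarrow> real^'n) \<Rightarrow> (nat \<Rightarrow> 'a \<Rightarrow> real^'m)
     \<Rightarrow> (nat \<Rightarrow> 'a \<Rightarrow> real^'n) \<Rightarrow> (nat \<Rightarrow> 'a \<Rightarrow> real^'m) \<Rightarrow> nat \<Rightarrow> 'a \<Rightarrow> real^'n" where
  "Dg w bx bu sx su x u z v = (\<lambda>k \<omega>. if k = 0 then - z 0 \<omega>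
     else blinfun_apply (bx (k - 1) (x (k - 1) \<omega>) (u (k - 1) \<omega>)) (z (k - 1) \<omega>)
          + blinfun_apply (bu (k - 1) (x (k - 1) \<omega>) (u (k - 1) \<omega>)) (v (k - 1) \<omega>)
          + (\<Sum>i\<in>UNIV. (w k \<omega> $ i) *\<^sub>R
               (blinfun_apply (sx (k - 1) (x (k - 1) \<omega>) (u (k - 1) \<omega>) i) (z (k - 1) \<omega>)
                + blinfun_apply (su (k - 1) (x (k - 1) \<omega>) (u (k - 1) \<omega>) i) (v (k - 1) \<omega>)))
          - z k \<omega>)"

end

theory Submission
  imports Defs
begin

(*
  Both assertions are stability estimates for the forward recursion
    z_0 = - delta_0,   z_(k+1) = F_k(z_k) + sum_i w^i_(k+1) G^i_k(z_k) - delta_(k+1)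
  whose coefficients are Lipschitz in the state: for Dg(x,u)(z,0) = delta they are the
  linearisations b_x, sigma^i_x along (x,u), for g(x',u) = y they are b(., u_k), sigma^i(., u_k)
  and delta = y - (x0, 0, ..., 0).  The recursion determines z uniquely and keeps it in the
  product of the X_k.  For any x, the error e = z - x satisfies a recursion of the same kind,
  forced by the residual r of x.  Since w_(k+1) is independent of F_k with E (w^i_(k+1))^2 = 1,
  one step gives E|e_(k+1)|^2 <= K (E|e_k|^2 + E|r_(k+1)|^2), and summing square roots yields
  the constant (N+1) sqrt(K)^N.  The cross terms between the coordinates of w_(k+1) are bounded by
  Cauchy-Schwarz rather than cancelled.  In the metric regularity estimate the control is left unchanged.
*)

section \<open>Square-integrable random vectors\<close>

definition L2 :: "'a measure \<Rightarrow> ('a \<Rightarrow> 'v::euclidean_space) set" where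
  "L2 M = {f. f \<in> borel_measurable M \<and> integrable M (\<lambda>\<omega>. (norm (f \<omega>))\<^sup>2)}"

lemma L2_of_sq_le_integrable:
  fixes g :: "'a \<Rightarrow> 'v::euclidean_space"
  assumes g: "g \<in> borel_measurable M" and h: "integrable M h"
    and le: "\<And>\<omega>. \<omega> \<in> space M \<Longrightarrow> (norm (g \<omega>))\<^sup>2 \<le> h \<omega>"
  shows "g \<in> L2 M" "(\<integral>\<omega>. (norm (g \<omega>))\<^sup>2 \<partial>M) \<le> (\<integral>\<omega>. h \<omega> \<partial>M)"
proof -
  have int: "integrable M (\<lambda>\<omega>. (norm (g \<omega>))\<^sup>2)"
    by (rule Bochner_Integration.integrable_bound[OF h]) (use g le in \<open>auto intro!: AE_I2 intro: order_trans[OF _ abs_ge_self]\<close>)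
  then show "g \<in> L2 M" using g by (simp add: L2_def)
  show "(\<integral>\<omega>. (norm (g \<omega>))\<^sup>2 \<partial>M) \<le> (\<integral>\<omega>. h \<omega> \<partial>M)"
    by (rule integral_mono[OF int h le])
qed

lemma L2_dominated:
  fixes g :: "'a \<Rightarrow> 'v::euclidean_space" and f :: "'a \<Rightarrow> 'u::euclidean_space"
  assumes g: "g \<in> borel_measurable M" and f: "f \<in> L2 M"
    and le: "\<And>\<omega>. \<omega> \<in> space M \<Longrightarrow> norm (g \<omega>) \<le> C * norm (f \<omega>)"
  shows "g \<in> L2 M" "(\<integral>\<omega>. (norm (g \<omega>))\<^sup>2 \<partial>M) \<le> C\<^sup>2 * (\<integral>\<omega>. (norm (f \<omega>))\<^sup>2 \<partial>M)"
proof -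
  have sq: "(norm (g \<omega>))\<^sup>2 \<le> C\<^sup>2 * (norm (f \<omega>))\<^sup>2" if "\<omega> \<in> space M" for \<omega>
    using power_mono[OF le[OF that] norm_ge_zero, of 2] by (simp add: power_mult_distrib)
  have "integrable M (\<lambda>\<omega>. C\<^sup>2 * (norm (f \<omega>))\<^sup>2)" using f by (simp add: L2_def)
  from L2_of_sq_le_integrable[OF g this sq] show "g \<in> L2 M"
    "(\<integral>\<omega>. (norm (g \<omega>))\<^sup>2 \<partial>M) \<le> C\<^sup>2 * (\<integral>\<omega>. (norm (f \<omega>))\<^sup>2 \<partial>M)"
    by simp_all
qed

lemma L2_sum:
  fixes f :: "'i \<Rightarrow> 'a \<Rightarrow> 'v::euclidean_space"
  assumes "finite I" and f: "\<And>i. i \<in> I \<Longrightarrow> f i \<in> L2 M"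
  shows "(\<lambda>\<omega>. \<Sum>i\<in>I. f i \<omega>) \<in> L2 M"
    "(\<integral>\<omega>. (norm (\<Sum>i\<in>I. f i \<omega>))\<^sup>2 \<partial>M) \<le> card I * (\<Sum>i\<in>I. \<integral>\<omega>. (norm (f i \<omega>))\<^sup>2 \<partial>M)"
proof -
  have sq: "(norm (\<Sum>i\<in>I. f i \<omega>))\<^sup>2 \<le> card I * (\<Sum>i\<in>I. (norm (f i \<omega>))\<^sup>2)" for \<omega>
  proof -
    have "(norm (\<Sum>i\<in>I. f i \<omega>))\<^sup>2 \<le> (\<Sum>i\<in>I. norm (f i \<omega>))\<^sup>2"
      by (intro power_mono norm_sum) simp
    also have "\<dots> \<le> card I * (\<Sum>i\<in>I. (norm (f i \<omega>))\<^sup>2)"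
      using sum_squared_le_sum_of_squares[of "\<lambda>i. norm (f i \<omega>)" I] by (simp add: mult.commute)
    finally show ?thesis .
  qed
  have meas: "(\<lambda>\<omega>. \<Sum>i\<in>I. f i \<omega>) \<in> borel_measurable M"
    using f by (auto simp: L2_def intro!: borel_measurable_sum)
  have int: "integrable M (\<lambda>\<omega>. card I * (\<Sum>i\<in>I. (norm (f i \<omega>))\<^sup>2))"
    using f by (auto simp: L2_def)
  note bound = L2_of_sq_le_integrable[OF meas int sq]
  show "(\<lambda>\<omega>. \<Sum>i\<in>I. f i \<omega>) \<in> L2 M" by (rule bound(1))
  show "(\<integral>\<omega>. (norm (\<Sum>i\<in>I. f i \<omega>))\<^sup>2 \<partial>M) \<le> card I * (\<Sum>i\<in>I. \<integral>\<omega>. (norm (f i \<omega>))\<^sup>2 \<partial>M)"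
    using bound(2) f by (simp add: L2_def integral_sum)
qed

lemma L2_add:
  fixes f g :: "'a \<Rightarrow> 'v::euclidean_space"
  assumes "f \<in> L2 M" "g \<in> L2 M"
  shows "(\<lambda>\<omega>. f \<omega> + g \<omega>) \<in> L2 M"
    "(\<integral>\<omega>. (norm (f \<omega> + g \<omega>))\<^sup>2 \<partial>M) \<le> 2 * (\<integral>\<omega>. (norm (f \<omega>))\<^sup>2 \<partial>M) + 2 * (\<integral>\<omega>. (norm (g \<omega>))\<^sup>2 \<partial>M)"
  using L2_sum[of UNIV "\<lambda>b. if b then g else f" M] assms by (simp_all add: UNIV_bool add.commute)

lemma L2_uminus:
  fixes f :: "'a \<Rightarrow> 'v::euclidean_space"
  shows "f \<in> L2 M \<Longrightarrow> (\<lambda>\<omega>. - f \<omega>) \<in> L2 M"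
  by (simp add: L2_def borel_measurable_uminus)

lemma L2_diff:
  fixes f g :: "'a \<Rightarrow> 'v::euclidean_space"
  shows "f \<in> L2 M \<Longrightarrow> g \<in> L2 M \<Longrightarrow> (\<lambda>\<omega>. f \<omega> - g \<omega>) \<in> L2 M"
  using L2_add(1)[of f M "\<lambda>\<omega>. - g \<omega>"] L2_uminus[of g M] by simp

lemma L2_const: "finite_measure M \<Longrightarrow> (\<lambda>_. c) \<in> L2 M"
  by (simp add: L2_def finite_measure.integrable_const)

lemma L2_norm:
  fixes f :: "'a \<Rightarrow> 'v::euclidean_space"
  shows "f \<in> L2 M \<Longrightarrow> (\<lambda>\<omega>. norm (f \<omega>)) \<in> L2 M"
  unfolding L2_def by auto measurable

lemma L2_linear_growth:
  fixes g :: "'a \<Rightarrow> 'v::euclidean_space" and f :: "'a \<Rightarrow> 'u::euclidean_space"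
  assumes "finite_measure M" and g: "g \<in> borel_measurable M" and f: "f \<in> L2 M"
    and le: "\<And>\<omega>. \<omega> \<in> space M \<Longrightarrow> norm (g \<omega>) \<le> C * (1 + norm (f \<omega>))"
  shows "g \<in> L2 M"
proof (rule L2_dominated(1)[OF g])
  show "(\<lambda>\<omega>. 1 + norm (f \<omega>)) \<in> L2 M"
    by (intro L2_add L2_const L2_norm assms)
  show "norm (g \<omega>) \<le> C * norm (1 + norm (f \<omega>))" if "\<omega> \<in> space M" for \<omega>
    using le[OF that] by simp
qed

lemma nrm_nonneg: "0 \<le> nrm M f"
  unfolding nrm_def by (simp add: integral_nonneg_AE)

lemma nrm_uminus: "nrm M (\<lambda>\<omega>. - f \<omega>) = nrm M f"
  by (simp add: nrm_def)

lemma distX_le: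
  assumes "(x', u') \<in> S"
  shows "distX M N (x, u) S \<le> nX M N (x - x') + nU M N (u - u')"
  unfolding distX_def
proof (rule cInf_lower)
  show "bdd_below ((\<lambda>q. nX M N (fst (x, u) - fst q) + nU M N (snd (x, u) - snd q)) ` S)"
    by (rule bdd_belowI[of _ 0]) (auto simp: nX_def nU_def intro!: add_nonneg_nonneg sum_nonneg nrm_nonneg)
qed (use assms in force)

section \<open>The noise filtration\<close>

lemma borel_measurable_vec_nth[measurable]: "(\<lambda>v::real^'d. v $ i) \<in> borel_measurable borel"
  by (intro borel_measurable_continuous_onI continuous_intros)

lemma space_filt[simp]: "space (filt M w k) = space M"
  unfolding filt_def by (simp add: space_measure_of_conv)

lemma sets_filt:
  "sets (filt M w k) = sigma_sets (space M) (\<Union>j\<in>{1..k}. {w j -` A \<inter> space M | A. A \<in> sets borel})"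
  unfolding filt_def by (rule sets_measure_of) auto

lemma subalgebra_filt_mono: "j \<le> k \<Longrightarrow> subalgebra (filt M w k) (filt M w j)"
  unfolding subalgebra_def sets_filt by (auto intro!: sigma_sets_mono') fastforce

lemma measurable_filt_mono:
  "j \<le> k \<Longrightarrow> f \<in> borel_measurable (filt M w j) \<Longrightarrow> f \<in> borel_measurable (filt M w k)"
  using measurable_from_subalg subalgebra_filt_mono by blast

lemma measurable_noise_filt:
  fixes w :: "nat \<Rightarrow> 'a \<Rightarrow> real^'d"
  shows "w (Suc k) \<in> borel_measurable (filt M w (Suc k))"
proof (rule measurableI)
  fix A :: "(real^'d) set" assume "A \<in> sets borel"
  then show "w (Suc k) -` A \<inter> space (filt M w (Suc k)) \<in> sets (filt M w (Suc k))"
    unfolding sets_filt space_filt by (intro sigma_sets.Basic UN_I[of "Suc k"]) auto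
qed simp

lemma Xsp_SucI:
  "a \<in> L2F M w k \<Longrightarrow> (\<And>i. b i \<in> L2F M w k)
    \<Longrightarrow> (\<lambda>\<omega>. a \<omega> + (\<Sum>i\<in>UNIV. w (Suc k) \<omega> $ i *\<^sub>R b i \<omega>)) \<in> Xsp M w (Suc k)"
  unfolding Xsp_def by auto

lemma Xsp_SucE:
  assumes "f \<in> Xsp M w (Suc k)"
  obtains a b where "a \<in> L2F M w k" "\<And>i. b i \<in> L2F M w k"
    "f = (\<lambda>\<omega>. a \<omega> + (\<Sum>i\<in>UNIV. w (Suc k) \<omega> $ i *\<^sub>R b i \<omega>))"
  using assms unfolding Xsp_def by auto

lemma Xsp_zero: "(\<lambda>_. 0) \<in> Xsp M w k"
proof (cases k)
  case (Suc j)
  have "(\<lambda>_. 0) \<in> L2F M w j" by (simp add: L2F_def)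
  from Xsp_SucI[OF this this] Suc show ?thesis by simp
qed (auto simp: Xsp_def)

lemma prodU_measurable: "u \<in> prodU M w N \<Longrightarrow> k < N \<Longrightarrow> u k \<in> borel_measurable (filt M w k)"
  by (simp add: prodU_def L2F_def)

locale noise = prob_space +
  fixes w :: "nat \<Rightarrow> 'a \<Rightarrow> real^'d" and N :: nat
  assumes noise_measurable: "\<And>k. k \<in> {1..N} \<Longrightarrow> w k \<in> borel_measurable M"
    and noise_indep: "indep_vars (\<lambda>_. borel) w {1..N}"
    and noise_second_moment:
      "\<And>k i. k \<in> {1..N} \<Longrightarrow> integrable M (\<lambda>\<omega>. \<bar>w k \<omega> $ i\<bar>\<^sup>2) \<and> (\<integral>\<omega>. \<bar>w k \<omega> $ i\<bar>\<^sup>2 \<partial>M) = 1"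
begin

lemma subalgebra_filt: "k \<le> N \<Longrightarrow> subalgebra M (filt M w k)"
  unfolding subalgebra_def sets_filt
  by (auto intro!: sets.sigma_sets_subset measurable_sets noise_measurable)

lemma measurable_filt_imp_measurable:
  "k \<le> N \<Longrightarrow> f \<in> borel_measurable (filt M w k) \<Longrightarrow> f \<in> borel_measurable M"
  using measurable_from_subalg subalgebra_filt by blast

lemma L2F_subset_L2: "k \<le> N \<Longrightarrow> L2F M w k \<subseteq> L2 M"
  by (auto simp: L2F_def L2_def intro: measurable_filt_imp_measurable)

lemma L2F_diff: "k \<le> N \<Longrightarrow> f \<in> L2F M w k \<Longrightarrow> g \<in> L2F M w k \<Longrightarrow> (\<lambda>\<omega>. f \<omega> - g \<omega>) \<in> L2F M w k"
  using L2_diff[of f M g] L2F_subset_L2 by (auto simp: L2F_def L2_def)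

lemma L2F_lipschitz_image:
  fixes H :: "'a \<Rightarrow> 'v::euclidean_space \<Rightarrow> 'u::euclidean_space"
  assumes k: "k \<le> N" and v: "v \<in> L2F M w k"
    and H_meas: "\<And>v. v \<in> borel_measurable (filt M w k) \<Longrightarrow> (\<lambda>\<omega>. H \<omega> (v \<omega>)) \<in> borel_measurable (filt M w k)"
    and H_zero: "integrable M (\<lambda>\<omega>. (norm (H \<omega> 0))\<^sup>2)"
    and H_lip: "\<And>\<omega> v v'. norm (H \<omega> v - H \<omega> v') \<le> L * norm (v - v')"
  shows "(\<lambda>\<omega>. H \<omega> (v \<omega>)) \<in> L2F M w k"
proof -
  have meas: "(\<lambda>\<omega>. H \<omega> (v \<omega>)) \<in> borel_measurable (filt M w k)"
    using v by (auto simp: L2F_def intro: H_meas)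
  have meas_zero: "(\<lambda>\<omega>. H \<omega> 0) \<in> borel_measurable M"
    using H_meas[of "\<lambda>_. 0"] measurable_filt_imp_measurable[OF k] by simp
  have vL2: "v \<in> L2 M" using L2F_subset_L2[OF k] v by auto
  have "(\<lambda>\<omega>. H \<omega> (v \<omega>) - H \<omega> 0) \<in> L2 M"
    using measurable_filt_imp_measurable[OF k meas] meas_zero H_lip[of _ "v _" 0]
    by (intro L2_dominated(1)[OF _ vL2]) auto
  moreover have "(\<lambda>\<omega>. H \<omega> 0) \<in> L2 M" using meas_zero H_zero by (simp add: L2_def)
  ultimately have "(\<lambda>\<omega>. H \<omega> (v \<omega>)) \<in> L2 M" using L2_add(1) by fastforce
  with meas show ?thesis by (simp add: L2F_def L2_def)
qed

lemma indep_set_noise_filt: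
  assumes k: "k < N"
  shows "indep_set (sigma_sets (space M) {w (Suc k) -` A \<inter> space M | A. A \<in> sets borel}) (sets (filt M w k))"
proof -
  let ?G = "\<lambda>j. {w j -` A \<inter> space M | A. A \<in> sets (borel :: (real^'d) measure)}"
  let ?I = "case_bool {Suc k} {1..k}"
  have "indep_sets (\<lambda>b. sigma_sets (space M) (\<Union>j\<in>?I b. ?G j)) UNIV"
  proof (rule indep_sets_collect_sigma)
    show "indep_sets ?G (\<Union>b\<in>UNIV. ?I b)"
    proof (rule indep_sets_mono_index)
      show "indep_sets ?G {1..N}" using noise_indep unfolding indep_vars_def2 by auto
      show "(\<Union>b\<in>UNIV. ?I b) \<subseteq> {1..N}" using k by (auto simp: UNIV_bool)
    qed
    show "Int_stable (?G j)" for j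
    proof (rule Int_stableI)
      fix a b assume "a \<in> ?G j" "b \<in> ?G j"
      then obtain A B where "a = w j -` A \<inter> space M" "b = w j -` B \<inter> space M" "A \<in> sets borel" "B \<in> sets borel"
        by auto
      then show "a \<inter> b \<in> ?G j" by (intro CollectI exI[of _ "A \<inter> B"]) auto
    qed
    show "disjoint_family_on ?I UNIV" by (auto simp: disjoint_family_on_def UNIV_bool)
  qed
  moreover have "(\<lambda>b. sigma_sets (space M) (\<Union>j\<in>?I b. ?G j))
      = case_bool (sigma_sets (space M) (?G (Suc k))) (sets (filt M w k))"
    by (auto simp: fun_eq_iff sets_filt split: bool.split)
  ultimately show ?thesis unfolding indep_set_def by simp
qed

lemma indep_var_noise_filt:
  fixes f :: "real^'d \<Rightarrow> real" and Y :: "'a \<Rightarrow> real"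
  assumes k: "k < N" and f: "f \<in> borel_measurable borel" and Y: "Y \<in> borel_measurable (filt M w k)"
  shows "indep_var borel (\<lambda>\<omega>. f (w (Suc k) \<omega>)) borel Y"
  unfolding indep_var_eq
proof (intro conjI)
  show "random_variable borel (\<lambda>\<omega>. f (w (Suc k) \<omega>))"
    using noise_measurable[of "Suc k"] k f by simp
  show "random_variable borel Y" using measurable_filt_imp_measurable[OF _ Y] k by simp
  have "sigma_sets (space M) {(\<lambda>\<omega>. f (w (Suc k) \<omega>)) -` A \<inter> space M |A. A \<in> sets borel}
     \<subseteq> sigma_sets (space M) {w (Suc k) -` A \<inter> space M | A. A \<in> sets borel}"
  proof (rule sigma_sets_mono', safe)
    fix A :: "real set" assume "A \<in> sets borel"
    then show "\<exists>B. (\<lambda>\<omega>. f (w (Suc k) \<omega>)) -` A \<inter> space M = w (Suc k) -` B \<inter> space M \<and> B \<in> sets borel"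
      using measurable_sets[OF f] by (intro exI[of _ "f -` A"]) auto
  qed
  moreover have "sigma_sets (space M) {Y -` A \<inter> space M |A. A \<in> sets borel} \<subseteq> sets (filt M w k)"
    using sigma_sets_le_sets_iff[of "filt M w k"] measurable_sets[OF Y] by auto
  ultimately show "indep_set (sigma_sets (space M) {(\<lambda>\<omega>. f (w (Suc k) \<omega>)) -` A \<inter> space M |A. A \<in> sets borel})
     (sigma_sets (space M) {Y -` A \<inter> space M |A. A \<in> sets borel})"
    using indep_set_noise_filt[OF k] unfolding indep_set_def
    by (elim indep_sets_mono_sets) (auto split: bool.split)
qed

lemma integral_noise_sq_mult:
  fixes Y :: "'a \<Rightarrow> real"
  assumes k: "k < N" and Y: "Y \<in> borel_measurable (filt M w k)" "integrable M Y"
  shows "integrable M (\<lambda>\<omega>. (w (Suc k) \<omega> $ i)\<^sup>2 * Y \<omega>)"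
    "(\<integral>\<omega>. (w (Suc k) \<omega> $ i)\<^sup>2 * Y \<omega> \<partial>M) = (\<integral>\<omega>. Y \<omega> \<partial>M)"
proof -
  have "(\<lambda>v::real^'d. (v $ i)\<^sup>2) \<in> borel_measurable borel"
    by measurable
  from indep_var_noise_filt[OF k this Y(1)]
  have indep: "indep_var borel (\<lambda>\<omega>. (w (Suc k) \<omega> $ i)\<^sup>2) borel Y" .
  have moment: "integrable M (\<lambda>\<omega>. (w (Suc k) \<omega> $ i)\<^sup>2)" "(\<integral>\<omega>. (w (Suc k) \<omega> $ i)\<^sup>2 \<partial>M) = 1"
    using noise_second_moment[of "Suc k" i] k by auto
  show "integrable M (\<lambda>\<omega>. (w (Suc k) \<omega> $ i)\<^sup>2 * Y \<omega>)"
    by (rule indep_var_integrable[OF indep moment(1) Y(2)])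
  show "(\<integral>\<omega>. (w (Suc k) \<omega> $ i)\<^sup>2 * Y \<omega> \<partial>M) = (\<integral>\<omega>. Y \<omega> \<partial>M)"
    using indep_var_lebesgue_integral[OF indep moment(1) Y(2)] moment(2) by simp
qed

lemma L2_noise_sum:
  fixes a :: "'d \<Rightarrow> 'a \<Rightarrow> 'v::euclidean_space"
  assumes k: "k < N" and a: "\<And>i. a i \<in> L2F M w k"
  shows "(\<lambda>\<omega>. \<Sum>i\<in>UNIV. w (Suc k) \<omega> $ i *\<^sub>R a i \<omega>) \<in> L2 M"
    "(\<integral>\<omega>. (norm (\<Sum>i\<in>UNIV. w (Suc k) \<omega> $ i *\<^sub>R a i \<omega>))\<^sup>2 \<partial>M)
       \<le> CARD('d) * (\<Sum>i\<in>UNIV. \<integral>\<omega>. (norm (a i \<omega>))\<^sup>2 \<partial>M)"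
proof -
  have summand: "(\<lambda>\<omega>. w (Suc k) \<omega> $ i *\<^sub>R a i \<omega>) \<in> L2 M"
    "(\<integral>\<omega>. (norm (w (Suc k) \<omega> $ i *\<^sub>R a i \<omega>))\<^sup>2 \<partial>M) = (\<integral>\<omega>. (norm (a i \<omega>))\<^sup>2 \<partial>M)" for i
  proof -
    have Y: "(\<lambda>\<omega>. (norm (a i \<omega>))\<^sup>2) \<in> borel_measurable (filt M w k)" "integrable M (\<lambda>\<omega>. (norm (a i \<omega>))\<^sup>2)"
      using a[of i] by (auto simp: L2F_def)
    have sq: "(norm (w (Suc k) \<omega> $ i *\<^sub>R a i \<omega>))\<^sup>2 = (w (Suc k) \<omega> $ i)\<^sup>2 * (norm (a i \<omega>))\<^sup>2" for \<omega>
      by (simp add: power_mult_distrib)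
    have "w (Suc k) \<in> borel_measurable M"
      using noise_measurable[of "Suc k"] k by simp
    moreover have "a i \<in> borel_measurable M"
      using L2F_subset_L2[of k] a[of i] k by (auto simp: L2_def)
    ultimately have "(\<lambda>\<omega>. w (Suc k) \<omega> $ i *\<^sub>R a i \<omega>) \<in> borel_measurable M"
      by measurable
    then show "(\<lambda>\<omega>. w (Suc k) \<omega> $ i *\<^sub>R a i \<omega>) \<in> L2 M"
      using integral_noise_sq_mult(1)[OF k Y] by (simp add: L2_def sq del: norm_scaleR)
    show "(\<integral>\<omega>. (norm (w (Suc k) \<omega> $ i *\<^sub>R a i \<omega>))\<^sup>2 \<partial>M) = (\<integral>\<omega>. (norm (a i \<omega>))\<^sup>2 \<partial>M)"
      using integral_noise_sq_mult(2)[OF k Y] by (simp add: sq del: norm_scaleR)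
  qed
  note sum = L2_sum[of "UNIV :: 'd set" "\<lambda>i \<omega>. w (Suc k) \<omega> $ i *\<^sub>R a i \<omega>" M]
  from sum summand
  show "(\<lambda>\<omega>. \<Sum>i\<in>UNIV. w (Suc k) \<omega> $ i *\<^sub>R a i \<omega>) \<in> L2 M"
    "(\<integral>\<omega>. (norm (\<Sum>i\<in>UNIV. w (Suc k) \<omega> $ i *\<^sub>R a i \<omega>))\<^sup>2 \<partial>M)
       \<le> CARD('d) * (\<Sum>i\<in>UNIV. \<integral>\<omega>. (norm (a i \<omega>))\<^sup>2 \<partial>M)"
    by simp_all
qed

lemma Xsp_subset_L2F:
  assumes "k \<le> N" and f: "f \<in> Xsp M w k"
  shows "f \<in> L2F M w k"
proof (cases k)
  case 0
  then obtain c where "f = (\<lambda>_. c)" using f by (auto simp: Xsp_def)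
  then show ?thesis by (simp add: L2F_def)
next
  case (Suc j)
  from f Suc have "f \<in> Xsp M w (Suc j)" by simp
  then obtain a b where a: "a \<in> L2F M w j" and b: "\<And>i. b i \<in> L2F M w j"
    and f_eq: "f = (\<lambda>\<omega>. a \<omega> + (\<Sum>i\<in>UNIV. w (Suc j) \<omega> $ i *\<^sub>R b i \<omega>))"
    by (rule Xsp_SucE) auto
  have j: "j < N" using Suc assms by simp
  have "a \<in> borel_measurable (filt M w (Suc j))" "\<And>i. b i \<in> borel_measurable (filt M w (Suc j))"
    using a b by (auto simp: L2F_def intro: measurable_filt_mono[of j])
  with measurable_noise_filt[of w j] have "f \<in> borel_measurable (filt M w (Suc j))"
    unfolding f_eq by measurable
  moreover have "f \<in> L2 M"
    unfolding f_eq using L2F_subset_L2[of j] a j by (intro L2_add L2_noise_sum b) auto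
  ultimately show ?thesis using Suc by (simp add: L2F_def L2_def)
qed

lemma Xsp_diff:
  assumes "k \<le> N" and f: "f \<in> Xsp M w k" and g: "g \<in> Xsp M w k"
  shows "(\<lambda>\<omega>. f \<omega> - g \<omega>) \<in> Xsp M w k"
proof (cases k)
  case 0
  then show ?thesis using f g by (auto simp: Xsp_def)
next
  case (Suc j)
  from f Suc have "f \<in> Xsp M w (Suc j)" by simp
  then obtain a b where a: "a \<in> L2F M w j" and b: "\<And>i. b i \<in> L2F M w j"
    and f_eq: "f = (\<lambda>\<omega>. a \<omega> + (\<Sum>i\<in>UNIV. w (Suc j) \<omega> $ i *\<^sub>R b i \<omega>))"
    by (rule Xsp_SucE) auto
  from g Suc have "g \<in> Xsp M w (Suc j)" by simp
  then obtain a' b' where a': "a' \<in> L2F M w j" and b': "\<And>i. b' i \<in> L2F M w j"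
    and g_eq: "g = (\<lambda>\<omega>. a' \<omega> + (\<Sum>i\<in>UNIV. w (Suc j) \<omega> $ i *\<^sub>R b' i \<omega>))"
    by (rule Xsp_SucE) auto
  have j: "j \<le> N" using Suc assms by simp
  have "(\<lambda>\<omega>. f \<omega> - g \<omega>)
      = (\<lambda>\<omega>. (a \<omega> - a' \<omega>) + (\<Sum>i\<in>UNIV. w (Suc j) \<omega> $ i *\<^sub>R (b i \<omega> - b' i \<omega>)))"
    by (simp add: f_eq g_eq scaleR_diff_right sum_subtractf algebra_simps)
  also have "\<dots> \<in> Xsp M w (Suc j)"
    using j a a' b b' by (intro Xsp_SucI L2F_diff)
  finally show ?thesis using Suc by simp
qed

lemma Xsp_uminus: "k \<le> N \<Longrightarrow> f \<in> Xsp M w k \<Longrightarrow> (\<lambda>\<omega>. - f \<omega>) \<in> Xsp M w k"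
  using Xsp_diff[OF _ Xsp_zero] by simp

lemma prodX_L2F: "x \<in> prodX M w N \<Longrightarrow> k \<le> N \<Longrightarrow> x k \<in> L2F M w k"
  unfolding prodX_def using Xsp_subset_L2F by blast

lemma prodX_measurable: "x \<in> prodX M w N \<Longrightarrow> k \<le> N \<Longrightarrow> x k \<in> borel_measurable (filt M w k)"
  using prodX_L2F[of x k] by (simp add: L2F_def)

lemma integral_noise_step_le:
  fixes e A D :: "'a \<Rightarrow> 'v::euclidean_space" and B :: "'d \<Rightarrow> 'a \<Rightarrow> 'v"
  assumes k: "k < N" and e: "e \<in> L2F M w k"
    and A: "A \<in> borel_measurable (filt M w k)" "\<And>\<omega>. norm (A \<omega>) \<le> L * norm (e \<omega>)"
    and B: "\<And>i. B i \<in> borel_measurable (filt M w k)" "\<And>i \<omega>. norm (B i \<omega>) \<le> L * norm (e \<omega>)"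
    and D: "D \<in> L2 M"
  shows "(\<integral>\<omega>. (norm (A \<omega> + (\<Sum>i\<in>UNIV. w (Suc k) \<omega> $ i *\<^sub>R B i \<omega>) + D \<omega>))\<^sup>2 \<partial>M)
    \<le> 4 * (1 + L\<^sup>2 + (real CARD('d))\<^sup>2 * L\<^sup>2) * ((\<integral>\<omega>. (norm (e \<omega>))\<^sup>2 \<partial>M) + (\<integral>\<omega>. (norm (D \<omega>))\<^sup>2 \<partial>M))"
proof -
  let ?d = "real CARD('d)" and ?E = "\<integral>\<omega>. (norm (e \<omega>))\<^sup>2 \<partial>M" and ?D = "\<integral>\<omega>. (norm (D \<omega>))\<^sup>2 \<partial>M"
  let ?S = "\<lambda>\<omega>. \<Sum>i\<in>UNIV. w (Suc k) \<omega> $ i *\<^sub>R B i \<omega>"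
  have eL2: "e \<in> L2 M" using L2F_subset_L2[of k] e k by auto
  have measM: "f \<in> borel_measurable M" if "f \<in> borel_measurable (filt M w k)" for f :: "'a \<Rightarrow> 'v"
    using measurable_filt_imp_measurable[OF _ that] k by simp
  note A_L2 = L2_dominated[OF measM[OF A(1)] eL2 A(2)]
  note B_L2 = L2_dominated[OF measM[OF B(1)] eL2 B(2)]
  have B_L2F: "\<And>i. B i \<in> L2F M w k" using B(1) B_L2(1) by (simp add: L2F_def L2_def)
  note S_L2 = L2_noise_sum[where a=B, OF k B_L2F]
  have "(\<integral>\<omega>. (norm (?S \<omega>))\<^sup>2 \<partial>M) \<le> ?d * (\<Sum>i\<in>UNIV. \<integral>\<omega>. (norm (B i \<omega>))\<^sup>2 \<partial>M)"
    by (rule S_L2(2))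
  also have "\<dots> \<le> ?d * (\<Sum>i\<in>(UNIV :: 'd set). L\<^sup>2 * ?E)"
    by (intro mult_left_mono sum_mono B_L2(2)) simp
  also have "\<dots> = ?d\<^sup>2 * L\<^sup>2 * ?E"
    by (simp add: power2_eq_square)
  finally have S_int: "(\<integral>\<omega>. (norm (?S \<omega>))\<^sup>2 \<partial>M) \<le> ?d\<^sup>2 * L\<^sup>2 * ?E" .
  note AS = L2_add[OF A_L2(1) S_L2(1)]
  note ASD = L2_add[OF AS(1) D]
  have "0 \<le> ?E" "0 \<le> ?D" by (simp_all add: integral_nonneg_AE)
  then have "0 \<le> L\<^sup>2 * ?D" "0 \<le> ?d\<^sup>2 * L\<^sup>2 * ?D" by simp_all
  moreover have "4 * (1 + L\<^sup>2 + ?d\<^sup>2 * L\<^sup>2) * (?E + ?D)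
      = 4 * ?E + 4 * (L\<^sup>2 * ?E) + 4 * (?d\<^sup>2 * L\<^sup>2 * ?E) + 4 * ?D + 4 * (L\<^sup>2 * ?D) + 4 * (?d\<^sup>2 * L\<^sup>2 * ?D)"
    by (simp add: algebra_simps)
  ultimately show ?thesis
    using ASD(2) AS(2) A_L2(2) S_int \<open>0 \<le> ?E\<close> \<open>0 \<le> ?D\<close> by linarith
qed

end

section \<open>Forward recursions driven by the noise\<close>

lemma sum_sqrt_le_of_recurrence:
  fixes q s :: "nat \<Rightarrow> real"
  assumes K: "1 \<le> K" and q0: "q 0 \<le> s 0"
    and qs: "\<And>k. k < N \<Longrightarrow> q (Suc k) \<le> K * (q k + s (Suc k))"
    and q_nonneg: "\<And>k. 0 \<le> q k" and s_nonneg: "\<And>k. 0 \<le> s k"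
  shows "(\<Sum>k\<le>N. sqrt (q k)) \<le> (real N + 1) * sqrt K ^ N * (\<Sum>k\<le>N. sqrt (s k))"
proof -
  have sK: "1 \<le> sqrt K" using K by simp
  have partial: "sqrt (q k) \<le> sqrt K ^ k * (\<Sum>j\<le>k. sqrt (s j))" if "k \<le> N" for k
    using that
  proof (induction k)
    case 0
    then show ?case using q0 by simp
  next
    case (Suc k)
    have "sqrt (q (Suc k)) \<le> sqrt K * sqrt (q k + s (Suc k))"
      using qs[of k] Suc.prems by (simp add: real_sqrt_mult[symmetric])
    also have "\<dots> \<le> sqrt K * (sqrt (q k) + sqrt K ^ k * sqrt (s (Suc k)))"
    proof -
      have "sqrt (s (Suc k)) \<le> sqrt K ^ k * sqrt (s (Suc k))"
        using mult_right_mono[OF one_le_power[OF sK, of k] real_sqrt_ge_zero[OF s_nonneg]] by simp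
      then show ?thesis
        using sqrt_add_le_add_sqrt[OF q_nonneg s_nonneg, of k "Suc k"] sK
        by (intro mult_left_mono) auto
    qed
    also have "\<dots> \<le> sqrt K * (sqrt K ^ k * (\<Sum>j\<le>k. sqrt (s j)) + sqrt K ^ k * sqrt (s (Suc k)))"
      using Suc sK by (intro mult_left_mono add_right_mono) auto
    also have "\<dots> = sqrt K ^ Suc k * (\<Sum>j\<le>Suc k. sqrt (s j))"
      by (simp add: algebra_simps)
    finally show ?case .
  qed
  have "sqrt (q k) \<le> sqrt K ^ N * (\<Sum>j\<le>N. sqrt (s j))" if "k \<le> N" for k
  proof -
    have "sqrt K ^ k * (\<Sum>j\<le>k. sqrt (s j)) \<le> sqrt K ^ N * (\<Sum>j\<le>N. sqrt (s j))"
      using that sK s_nonneg by (intro mult_mono power_increasing sum_mono2 sum_nonneg) auto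
    with partial[OF that] show ?thesis by linarith
  qed
  then have "(\<Sum>k\<le>N. sqrt (q k)) \<le> (\<Sum>k\<le>N. sqrt K ^ N * (\<Sum>j\<le>N. sqrt (s j)))"
    by (intro sum_mono) simp
  then show ?thesis by (simp add: algebra_simps)
qed

definition stability_constant :: "nat \<Rightarrow> real \<Rightarrow> real \<Rightarrow> real" where
  "stability_constant N d L = (real N + 1) * sqrt (4 * (1 + L\<^sup>2 + d\<^sup>2 * L\<^sup>2)) ^ N"

lemma stability_constant_pos: "0 < stability_constant N d L"
  unfolding stability_constant_def by (simp add: add_pos_nonneg)

locale forward_recursion = noise M w N
  for M :: "'a measure" and w :: "nat \<Rightarrow> 'a \<Rightarrow> real^'d" and N +
  fixes F :: "nat \<Rightarrow> 'a \<Rightarrow> 'v::euclidean_space \<Rightarrow> 'v" and G :: "nat \<Rightarrow> 'a \<Rightarrow> 'd \<Rightarrow> 'v \<Rightarrow> 'v"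
    and L :: real
  assumes F_measurable: "\<And>k v. k < N \<Longrightarrow> v \<in> borel_measurable (filt M w k)
      \<Longrightarrow> (\<lambda>\<omega>. F k \<omega> (v \<omega>)) \<in> borel_measurable (filt M w k)"
    and G_measurable: "\<And>k i v. k < N \<Longrightarrow> v \<in> borel_measurable (filt M w k)
      \<Longrightarrow> (\<lambda>\<omega>. G k \<omega> i (v \<omega>)) \<in> borel_measurable (filt M w k)"
    and F_lipschitz: "\<And>k \<omega> v v'. k < N \<Longrightarrow> norm (F k \<omega> v - F k \<omega> v') \<le> L * norm (v - v')"
    and G_lipschitz: "\<And>k \<omega> i v v'. k < N \<Longrightarrow> norm (G k \<omega> i v - G k \<omega> i v') \<le> L * norm (v - v')"
    and F_zero: "\<And>k. k < N \<Longrightarrow> integrable M (\<lambda>\<omega>. (norm (F k \<omega> 0))\<^sup>2)"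
    and G_zero: "\<And>k i. k < N \<Longrightarrow> integrable M (\<lambda>\<omega>. (norm (G k \<omega> i 0))\<^sup>2)"
begin

definition transition :: "nat \<Rightarrow> ('a \<Rightarrow> 'v) \<Rightarrow> 'a \<Rightarrow> 'v" where
  "transition k v \<omega> = F k \<omega> (v \<omega>) + (\<Sum>i\<in>UNIV. w (Suc k) \<omega> $ i *\<^sub>R G k \<omega> i (v \<omega>))"

(* For the linearised coefficients, defect z is Dg(x,u)(z,0); for the coefficients b(., u_k),
   sigma^i(., u_k), defect x' is g(x',u) with the initial datum x0 removed. *)
definition defect :: "(nat \<Rightarrow> 'a \<Rightarrow> 'v) \<Rightarrow> nat \<Rightarrow> 'a \<Rightarrow> 'v" where
  "defect x k \<omega> = (if k = 0 then - x 0 \<omega> else transition (k - 1) (x (k - 1)) \<omega> - x k \<omega>)"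

primrec solution :: "(nat \<Rightarrow> 'a \<Rightarrow> 'v) \<Rightarrow> nat \<Rightarrow> 'a \<Rightarrow> 'v" where
  "solution \<delta> 0 = (\<lambda>\<omega>. - \<delta> 0 \<omega>)"
| "solution \<delta> (Suc k) = (\<lambda>\<omega>. transition k (solution \<delta> k) \<omega> - \<delta> (Suc k) \<omega>)"

lemma defect_solution: "defect (solution \<delta>) k = \<delta> k"
  by (cases k) (simp_all add: defect_def fun_eq_iff)

lemma solution_unique:
  assumes "\<forall>k\<le>N. AE \<omega> in M. defect z k \<omega> = \<delta> k \<omega>" and "k \<le> N"
  shows "AE \<omega> in M. z k \<omega> = solution \<delta> k \<omega>"
  using \<open>k \<le> N\<close>
proof (induction k)
  case 0
  from assms(1) have "AE \<omega> in M. defect z 0 \<omega> = \<delta> 0 \<omega>" by simp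
  then show ?case by eventually_elim (auto simp: defect_def minus_equation_iff)
next
  case (Suc k)
  from Suc.IH Suc.prems have "AE \<omega> in M. z k \<omega> = solution \<delta> k \<omega>" by simp
  moreover from assms(1) Suc.prems have "AE \<omega> in M. defect z (Suc k) \<omega> = \<delta> (Suc k) \<omega>" by simp
  ultimately show ?case
  proof eventually_elim
    case (elim \<omega>)
    then have "transition k (z k) \<omega> = transition k (solution \<delta> k) \<omega>" by (simp add: transition_def)
    with elim(2) show ?case by (auto simp: defect_def algebra_simps)
  qed
qed

lemma transition_Xsp:
  assumes k: "k < N" and v: "v \<in> Xsp M w k"
  shows "transition k v \<in> Xsp M w (Suc k)"
proof -
  have k': "k \<le> N" using k by simp
  have v': "v \<in> L2F M w k" using Xsp_subset_L2F[OF k' v] .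
  have "(\<lambda>\<omega>. F k \<omega> (v \<omega>)) \<in> L2F M w k"
    by (rule L2F_lipschitz_image[OF k' v' F_measurable[OF k] F_zero[OF k] F_lipschitz[OF k]])
  moreover have "(\<lambda>\<omega>. G k \<omega> i (v \<omega>)) \<in> L2F M w k" for i
    by (rule L2F_lipschitz_image[OF k' v' G_measurable[OF k] G_zero[OF k] G_lipschitz[OF k]])
  ultimately show ?thesis
    unfolding transition_def[abs_def] by (rule Xsp_SucI)
qed

lemma defect_prodX:
  assumes x: "x \<in> prodX M w N"
  shows "defect x \<in> prodX M w N"
  unfolding prodX_def
proof (intro CollectI allI impI)
  fix k assume k: "k \<le> N"
  have x': "x j \<in> Xsp M w j" if "j \<le> N" for j using x that by (simp add: prodX_def)
  show "defect x k \<in> Xsp M w k"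
  proof (cases k)
    case 0
    then show ?thesis using Xsp_uminus[OF _ x'] by (simp add: defect_def[abs_def])
  next
    case (Suc j)
    then have "(\<lambda>\<omega>. transition j (x j) \<omega> - x (Suc j) \<omega>) \<in> Xsp M w (Suc j)"
      using x' k by (intro Xsp_diff transition_Xsp) auto
    then show ?thesis using Suc by (simp add: defect_def[abs_def])
  qed
qed

lemma solution_prodX:
  assumes \<delta>: "\<delta> \<in> prodX M w N"
  shows "solution \<delta> \<in> prodX M w N"
  unfolding prodX_def
proof (intro CollectI allI impI)
  have \<delta>': "\<delta> j \<in> Xsp M w j" if "j \<le> N" for j using \<delta> that by (simp add: prodX_def)
  show "solution \<delta> k \<in> Xsp M w k" if "k \<le> N" for k
    using that
  proof (induction k)
    case 0
    then show ?case using Xsp_uminus[OF _ \<delta>'] by simp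
  next
    case (Suc k)
    then show ?case using \<delta>' by (auto intro!: Xsp_diff transition_Xsp)
  qed
qed

lemma integral_solution_diff_Suc_le:
  assumes \<delta>: "\<delta> \<in> prodX M w N" and x: "x \<in> prodX M w N" and k: "k < N"
  shows "(\<integral>\<omega>. (norm (solution \<delta> (Suc k) \<omega> - x (Suc k) \<omega>))\<^sup>2 \<partial>M)
    \<le> 4 * (1 + L\<^sup>2 + (real CARD('d))\<^sup>2 * L\<^sup>2)
      * ((\<integral>\<omega>. (norm (solution \<delta> k \<omega> - x k \<omega>))\<^sup>2 \<partial>M)
        + (\<integral>\<omega>. (norm (defect x (Suc k) \<omega> - \<delta> (Suc k) \<omega>))\<^sup>2 \<partial>M))"
proof -
  have k': "k \<le> N" "Suc k \<le> N" using k by simp_all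
  have sol: "solution \<delta> k \<in> L2F M w k" using prodX_L2F[OF solution_prodX[OF \<delta>] k'(1)] .
  have xk: "x k \<in> L2F M w k" using prodX_L2F[OF x k'(1)] .
  have e: "(\<lambda>\<omega>. solution \<delta> k \<omega> - x k \<omega>) \<in> L2F M w k" using L2F_diff[OF k'(1) sol xk] .
  have D: "(\<lambda>\<omega>. defect x (Suc k) \<omega> - \<delta> (Suc k) \<omega>) \<in> L2 M"
    using L2F_subset_L2[OF k'(2)] L2F_diff[OF k'(2)] prodX_L2F[OF defect_prodX[OF x] k'(2)]
      prodX_L2F[OF \<delta> k'(2)] by blast
  have "solution \<delta> (Suc k) \<omega> - x (Suc k) \<omega>
      = (F k \<omega> (solution \<delta> k \<omega>) - F k \<omega> (x k \<omega>))
        + (\<Sum>i\<in>UNIV. w (Suc k) \<omega> $ i *\<^sub>R (G k \<omega> i (solution \<delta> k \<omega>) - G k \<omega> i (x k \<omega>)))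
        + (defect x (Suc k) \<omega> - \<delta> (Suc k) \<omega>)" for \<omega>
    by (simp add: defect_def transition_def scaleR_diff_right sum_subtractf algebra_simps)
  then have "(\<integral>\<omega>. (norm (solution \<delta> (Suc k) \<omega> - x (Suc k) \<omega>))\<^sup>2 \<partial>M)
      = (\<integral>\<omega>. (norm ((F k \<omega> (solution \<delta> k \<omega>) - F k \<omega> (x k \<omega>))
        + (\<Sum>i\<in>UNIV. w (Suc k) \<omega> $ i *\<^sub>R (G k \<omega> i (solution \<delta> k \<omega>) - G k \<omega> i (x k \<omega>)))
        + (defect x (Suc k) \<omega> - \<delta> (Suc k) \<omega>)))\<^sup>2 \<partial>M)"
    by (simp only:)
  also have "\<dots> \<le> 4 * (1 + L\<^sup>2 + (real CARD('d))\<^sup>2 * L\<^sup>2)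
      * ((\<integral>\<omega>. (norm (solution \<delta> k \<omega> - x k \<omega>))\<^sup>2 \<partial>M)
        + (\<integral>\<omega>. (norm (defect x (Suc k) \<omega> - \<delta> (Suc k) \<omega>))\<^sup>2 \<partial>M))"
  proof (rule integral_noise_step_le[OF k e _ F_lipschitz[OF k] _ G_lipschitz[OF k] D])
    have meas: "solution \<delta> k \<in> borel_measurable (filt M w k)" "x k \<in> borel_measurable (filt M w k)"
      using sol xk by (simp_all add: L2F_def)
    show "(\<lambda>\<omega>. F k \<omega> (solution \<delta> k \<omega>) - F k \<omega> (x k \<omega>)) \<in> borel_measurable (filt M w k)"
      by (intro borel_measurable_diff F_measurable[OF k] meas)
    show "(\<lambda>\<omega>. G k \<omega> i (solution \<delta> k \<omega>) - G k \<omega> i (x k \<omega>)) \<in> borel_measurable (filt M w k)" for i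
      by (intro borel_measurable_diff G_measurable[OF k] meas)
  qed
  finally show ?thesis .
qed

lemma nX_solution_diff_le:
  assumes \<delta>: "\<delta> \<in> prodX M w N" and x: "x \<in> prodX M w N"
  shows "nX M N (solution \<delta> - x) \<le> stability_constant N CARD('d) L * nX M N (defect x - \<delta>)"
proof -
  define K where "K = 4 * (1 + L\<^sup>2 + (real CARD('d))\<^sup>2 * L\<^sup>2)"
  define q where "q k = (\<integral>\<omega>. (norm (solution \<delta> k \<omega> - x k \<omega>))\<^sup>2 \<partial>M)" for k
  define s where "s k = (\<integral>\<omega>. (norm (defect x k \<omega> - \<delta> k \<omega>))\<^sup>2 \<partial>M)" for k
  have "q (Suc k) \<le> K * (q k + s (Suc k))" if "k < N" for k
    unfolding q_def s_def K_def by (rule integral_solution_diff_Suc_le[OF \<delta> x that])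
  moreover have "q 0 \<le> s 0" by (simp add: q_def s_def defect_def minus_diff_commute)
  moreover have "0 \<le> q k" "0 \<le> s k" for k by (simp_all add: q_def s_def integral_nonneg_AE)
  moreover have "1 \<le> K" by (simp add: K_def)
  ultimately have "(\<Sum>k\<le>N. sqrt (q k)) \<le> (real N + 1) * sqrt K ^ N * (\<Sum>k\<le>N. sqrt (s k))"
    by (intro sum_sqrt_le_of_recurrence)
  then show ?thesis
    by (simp add: nX_def nrm_def q_def s_def K_def stability_constant_def)
qed

end

section \<open>The controlled system\<close>

lemma borel_measurable_continuous_on_compose2:
  fixes h :: "'x::euclidean_space \<Rightarrow> 'y::euclidean_space \<Rightarrow> 'z::euclidean_space"
  assumes h: "continuous_on UNIV (\<lambda>(x, y). h x y)"
    and f: "f \<in> borel_measurable F" and g: "g \<in> borel_measurable F"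
  shows "(\<lambda>\<omega>. h (f \<omega>) (g \<omega>)) \<in> borel_measurable F"
  using measurable_compose[OF borel_measurable_Pair[OF f g] borel_measurable_continuous_onI[OF h]]
  by simp

lemma borel_measurable_blinfun_apply_continuous_on:
  fixes T :: "'x::euclidean_space \<Rightarrow> 'y::euclidean_space \<Rightarrow> 'p::euclidean_space \<Rightarrow>\<^sub>L 'q::euclidean_space"
  assumes T: "continuous_on UNIV (\<lambda>(x, y). T x y)"
    and f: "f \<in> borel_measurable F" and g: "g \<in> borel_measurable F" and v: "v \<in> borel_measurable F"
  shows "(\<lambda>\<omega>. blinfun_apply (T (f \<omega>) (g \<omega>)) (v \<omega>)) \<in> borel_measurable F"
proof -
  have "continuous_on UNIV (\<lambda>((x, y), p). blinfun_apply (T x y) p)"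
    using continuous_on_compose[OF continuous_on_fst[OF continuous_on_id] T[THEN continuous_on_subset]]
    by (auto simp: case_prod_beta o_def intro!: blinfun.continuous_on continuous_intros)
  from measurable_compose[OF borel_measurable_Pair[OF borel_measurable_Pair[OF f g] v]
      borel_measurable_continuous_onI[OF this]]
  show ?thesis by simp
qed

lemma lipschitz_of_partial_derivative_bound:
  fixes f :: "'x::euclidean_space \<Rightarrow> 'y::euclidean_space \<Rightarrow> 'z::euclidean_space"
  assumes deriv: "\<And>x y. ((\<lambda>(x', y'). f x' y') has_derivative
      (\<lambda>(v, v'). blinfun_apply (fx x y) v + blinfun_apply (fy x y) v')) (at (x, y))"
    and bound: "\<And>x y. norm (fx x y) \<le> C"
  shows "norm (f a y - f a' y) \<le> C * norm (a - a')"
proof (rule differentiable_bound[where S=UNIV and f'="\<lambda>x. blinfun_apply (fx x y)"])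
  fix x :: 'x
  have "((\<lambda>x'. (x', y)) has_derivative (\<lambda>v. (v, 0))) (at x)"
    by (auto intro!: derivative_eq_intros)
  from has_derivative_compose[OF this deriv[of x y]]
  show "((\<lambda>x'. f x' y) has_derivative blinfun_apply (fx x y)) (at x within UNIV)"
    by simp
qed (auto simp: norm_blinfun.rep_eq[symmetric] bound)

lemma norm_blinfun_apply_diff_le:
  "norm f \<le> L \<Longrightarrow> norm (blinfun_apply f v - blinfun_apply f v') \<le> L * norm (v - v')"
  using norm_blinfun[of f "v - v'"] mult_right_mono[of "norm f" L "norm (v - v')"]
  by (simp add: blinfun.diff_right)

locale controlled_system = noise M w N
  for M :: "'a measure" and w :: "nat \<Rightarrow> 'a \<Rightarrow> real^'d" and N +
  fixes b :: "nat \<Rightarrow> real^'n \<Rightarrow> real^'m \<Rightarrow> real^'n"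
    and sig :: "nat \<Rightarrow> real^'n \<Rightarrow> real^'m \<Rightarrow> 'd \<Rightarrow> real^'n"
    and bx :: "nat \<Rightarrow> real^'n \<Rightarrow> real^'m \<Rightarrow> (real^'n) \<Rightarrow>\<^sub>L (real^'n)"
    and bu :: "nat \<Rightarrow> real^'n \<Rightarrow> real^'m \<Rightarrow> (real^'m) \<Rightarrow>\<^sub>L (real^'n)"
    and sx :: "nat \<Rightarrow> real^'n \<Rightarrow> real^'m \<Rightarrow> 'd \<Rightarrow> (real^'n) \<Rightarrow>\<^sub>L (real^'n)"
    and su :: "nat \<Rightarrow> real^'n \<Rightarrow> real^'m \<Rightarrow> 'd \<Rightarrow> (real^'m) \<Rightarrow>\<^sub>L (real^'n)"
    and c1 L :: real
  assumes b_deriv: "\<And>k x u. k < N \<Longrightarrow>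
       ((\<lambda>(x', u'). b k x' u') has_derivative (\<lambda>(z, v). blinfun_apply (bx k x u) z + blinfun_apply (bu k x u) v)) (at (x, u))"
    and sig_deriv: "\<And>k x u i. k < N \<Longrightarrow>
       ((\<lambda>(x', u'). sig k x' u' i) has_derivative (\<lambda>(z, v). blinfun_apply (sx k x u i) z + blinfun_apply (su k x u i) v)) (at (x, u))"
    and bx_continuous: "\<And>k. k < N \<Longrightarrow> continuous_on UNIV (\<lambda>(x, u). bx k x u)"
    and sx_continuous: "\<And>k i. k < N \<Longrightarrow> continuous_on UNIV (\<lambda>(x, u). sx k x u i)"
    and b_growth: "\<And>k x u. k < N \<Longrightarrow> norm (b k x u) \<le> c1 * (1 + norm x + norm u)"
    and sig_growth: "\<And>k x u i. k < N \<Longrightarrow> norm (sig k x u i) \<le> c1 * (1 + norm x + norm u)"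
    and bx_bound: "\<And>k x u. k < N \<Longrightarrow> norm (bx k x u) \<le> L"
    and sx_bound: "\<And>k x u i. k < N \<Longrightarrow> norm (sx k x u i) \<le> L"
begin

lemma b_continuous: "k < N \<Longrightarrow> continuous_on UNIV (\<lambda>(x, u). b k x u)"
  using has_derivative_continuous[OF b_deriv] by (auto intro!: continuous_at_imp_continuous_on)

lemma sig_continuous: "k < N \<Longrightarrow> continuous_on UNIV (\<lambda>(x, u). sig k x u i)"
  using has_derivative_continuous[OF sig_deriv] by (auto intro!: continuous_at_imp_continuous_on)

lemma forward_recursion_linearised:
  assumes x: "x \<in> prodX M w N" and u: "u \<in> prodU M w N"
  shows "forward_recursion M w N (\<lambda>k \<omega>. blinfun_apply (bx k (x k \<omega>) (u k \<omega>)))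
    (\<lambda>k \<omega> i. blinfun_apply (sx k (x k \<omega>) (u k \<omega>) i)) L"
proof unfold_locales
  fix k and v :: "'a \<Rightarrow> real^'n" assume k: "k < N" and v: "v \<in> borel_measurable (filt M w k)"
  show "(\<lambda>\<omega>. blinfun_apply (bx k (x k \<omega>) (u k \<omega>)) (v \<omega>)) \<in> borel_measurable (filt M w k)"
    using bx_continuous[OF k] prodX_measurable[OF x] prodU_measurable[OF u k] v k
    by (intro borel_measurable_blinfun_apply_continuous_on) auto
  show "(\<lambda>\<omega>. blinfun_apply (sx k (x k \<omega>) (u k \<omega>) i) (v \<omega>)) \<in> borel_measurable (filt M w k)" for i
    using sx_continuous[OF k] prodX_measurable[OF x] prodU_measurable[OF u k] v k
    by (intro borel_measurable_blinfun_apply_continuous_on) auto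
next
  fix k \<omega> i and v v' :: "real^'n" assume k: "k < N"
  show "norm (blinfun_apply (bx k (x k \<omega>) (u k \<omega>)) v - blinfun_apply (bx k (x k \<omega>) (u k \<omega>)) v')
      \<le> L * norm (v - v')"
    by (rule norm_blinfun_apply_diff_le[OF bx_bound[OF k]])
  show "norm (blinfun_apply (sx k (x k \<omega>) (u k \<omega>) i) v - blinfun_apply (sx k (x k \<omega>) (u k \<omega>) i) v')
      \<le> L * norm (v - v')"
    by (rule norm_blinfun_apply_diff_le[OF sx_bound[OF k]])
qed (simp_all add: noise_measurable noise_indep noise_second_moment)

lemma forward_recursion_dynamics:
  assumes u: "u \<in> prodU M w N"
  shows "forward_recursion M w N (\<lambda>k \<omega> v. b k v (u k \<omega>)) (\<lambda>k \<omega> i v. sig k v (u k \<omega>) i) L"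
proof -
  have b_meas: "(\<lambda>\<omega>. b k (v \<omega>) (u k \<omega>)) \<in> borel_measurable (filt M w k)"
    and sig_meas: "(\<lambda>\<omega>. sig k (v \<omega>) (u k \<omega>) i) \<in> borel_measurable (filt M w k)"
    if k: "k < N" and v: "v \<in> borel_measurable (filt M w k)" for k i and v :: "'a \<Rightarrow> real^'n"
    using borel_measurable_continuous_on_compose2[OF b_continuous[OF k] v prodU_measurable[OF u k]]
      borel_measurable_continuous_on_compose2[OF sig_continuous[OF k] v prodU_measurable[OF u k]]
    by simp_all
  have b_zero: "integrable M (\<lambda>\<omega>. (norm (b k 0 (u k \<omega>)))\<^sup>2)"
    and sig_zero: "integrable M (\<lambda>\<omega>. (norm (sig k 0 (u k \<omega>) i))\<^sup>2)" if k: "k < N" for k i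
  proof -
    have uL2: "u k \<in> L2 M" using u k L2F_subset_L2[of k] by (auto simp: prodU_def)
    have "(\<lambda>\<omega>. b k 0 (u k \<omega>)) \<in> L2 M"
    proof (rule L2_linear_growth[OF _ _ uL2])
      show "(\<lambda>\<omega>. b k 0 (u k \<omega>)) \<in> borel_measurable M"
        using measurable_filt_imp_measurable[OF _ b_meas[OF k]] k by simp
      show "norm (b k 0 (u k \<omega>)) \<le> c1 * (1 + norm (u k \<omega>))" for \<omega>
        using b_growth[OF k, of 0 "u k \<omega>"] by simp
    qed simp
    moreover have "(\<lambda>\<omega>. sig k 0 (u k \<omega>) i) \<in> L2 M"
    proof (rule L2_linear_growth[OF _ _ uL2])
      show "(\<lambda>\<omega>. sig k 0 (u k \<omega>) i) \<in> borel_measurable M"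
        using measurable_filt_imp_measurable[OF _ sig_meas[OF k]] k by simp
      show "norm (sig k 0 (u k \<omega>) i) \<le> c1 * (1 + norm (u k \<omega>))" for \<omega>
        using sig_growth[OF k, of 0 "u k \<omega>" i] by simp
    qed simp
    ultimately show "integrable M (\<lambda>\<omega>. (norm (b k 0 (u k \<omega>)))\<^sup>2)"
      "integrable M (\<lambda>\<omega>. (norm (sig k 0 (u k \<omega>) i))\<^sup>2)"
      by (simp_all add: L2_def)
  qed
  show ?thesis
  proof unfold_locales
    fix k \<omega> and v v' :: "real^'n" assume k: "k < N"
    show "norm (b k v (u k \<omega>) - b k v' (u k \<omega>)) \<le> L * norm (v - v')"
      by (rule lipschitz_of_partial_derivative_bound[OF b_deriv[OF k] bx_bound[OF k]])
    show "norm (sig k v (u k \<omega>) i - sig k v' (u k \<omega>) i) \<le> L * norm (v - v')" for i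
      by (rule lipschitz_of_partial_derivative_bound[OF sig_deriv[OF k] sx_bound[OF k]])
  qed (simp_all add: noise_measurable noise_indep noise_second_moment b_meas sig_meas b_zero sig_zero)
qed

lemma Dg_uniquely_solvable:
  assumes x: "x \<in> prodX M w N" and u: "u \<in> prodU M w N" and \<delta>: "\<delta> \<in> prodX M w N"
  shows "\<exists>z \<in> prodX M w N.
      (\<forall>k\<le>N. AE \<omega> in M. Dg w bx bu sx su x u z (\<lambda>_ _. 0) k \<omega> = \<delta> k \<omega>)
    \<and> (\<forall>z' \<in> prodX M w N.
         (\<forall>k\<le>N. AE \<omega> in M. Dg w bx bu sx su x u z' (\<lambda>_ _. 0) k \<omega> = \<delta> k \<omega>)
         \<longrightarrow> (\<forall>k\<le>N. AE \<omega> in M. z' k \<omega> = z k \<omega>))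
    \<and> nX M N z \<le> stability_constant N CARD('d) L * nX M N \<delta>"
proof -
  interpret R: forward_recursion M w N "\<lambda>k \<omega>. blinfun_apply (bx k (x k \<omega>) (u k \<omega>))"
    "\<lambda>k \<omega> i. blinfun_apply (sx k (x k \<omega>) (u k \<omega>) i)" L
    using x u by (rule forward_recursion_linearised)
  have Dg_eq: "Dg w bx bu sx su x u z (\<lambda>_ _. 0) = R.defect z" for z
    by (simp add: fun_eq_iff Dg_def R.defect_def R.transition_def)
  have "nX M N (R.solution \<delta> - (\<lambda>_ _. 0)) \<le> stability_constant N CARD('d) L * nX M N (R.defect (\<lambda>_ _. 0) - \<delta>)"
    by (intro R.nX_solution_diff_le[OF \<delta>]) (simp add: prodX_def Xsp_zero)
  also have "R.defect (\<lambda>_ _. 0) - \<delta> = (\<lambda>k \<omega>. - \<delta> k \<omega>)"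
    by (simp add: fun_eq_iff R.defect_def R.transition_def)
  finally have "nX M N (R.solution \<delta>) \<le> stability_constant N CARD('d) L * nX M N \<delta>"
    by (simp add: nX_def nrm_uminus)
  then show ?thesis
    unfolding Dg_eq
  proof (intro bexI[of _ "R.solution \<delta>"] conjI ballI impI allI)
    show "R.solution \<delta> \<in> prodX M w N" by (rule R.solution_prodX[OF \<delta>])
    show "AE \<omega> in M. R.defect (R.solution \<delta>) k \<omega> = \<delta> k \<omega>" for k
      by (simp add: R.defect_solution)
    show "AE \<omega> in M. z' k \<omega> = R.solution \<delta> k \<omega>"
      if "\<forall>k\<le>N. AE \<omega> in M. R.defect z' k \<omega> = \<delta> k \<omega>" and "k \<le> N" for z' k
      using R.solution_unique[OF that] .
  qed
qed

lemma gmap_solvable_nearby: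
  assumes u: "u \<in> prodU M w N" and x: "x \<in> prodX M w N" and y: "y \<in> prodX M w N"
  shows "\<exists>x' \<in> prodX M w N. (\<forall>k\<le>N. AE \<omega> in M. gmap w x0 b sig x' u k \<omega> = y k \<omega>)
    \<and> nX M N (x - x') \<le> stability_constant N CARD('d) L * nX M N (gmap w x0 b sig x u - y)"
proof -
  interpret R: forward_recursion M w N "\<lambda>k \<omega> v. b k v (u k \<omega>)" "\<lambda>k \<omega> i v. sig k v (u k \<omega>) i" L
    using u by (rule forward_recursion_dynamics)
  define \<delta> where "\<delta> k \<omega> = y k \<omega> - (if k = 0 then x0 else 0)" for k \<omega>
  have gmap_eq: "gmap w x0 b sig x' u k \<omega> = R.defect x' k \<omega> + (if k = 0 then x0 else 0)" for x' k \<omega>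
    by (simp add: gmap_def R.defect_def R.transition_def)
  have \<delta>: "\<delta> \<in> prodX M w N"
    unfolding prodX_def
  proof (intro CollectI allI impI)
    fix k assume "k \<le> N"
    with y have "y k \<in> Xsp M w k" by (simp add: prodX_def)
    moreover have "\<delta> k = (if k = 0 then (\<lambda>\<omega>. y 0 \<omega> - x0) else y k)"
      by (simp add: \<delta>_def fun_eq_iff)
    ultimately show "\<delta> k \<in> Xsp M w k" by (auto simp: Xsp_def) blast
  qed
  have solves: "\<forall>k\<le>N. AE \<omega> in M. gmap w x0 b sig (R.solution \<delta>) u k \<omega> = y k \<omega>"
    by (simp add: gmap_eq R.defect_solution \<delta>_def)
  have bound: "nX M N (x - R.solution \<delta>) \<le> stability_constant N CARD('d) L * nX M N (gmap w x0 b sig x u - y)"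
  proof -
    have "nX M N (x - R.solution \<delta>) = nX M N (R.solution \<delta> - x)"
      by (simp add: nX_def nrm_def norm_minus_commute)
    moreover have "gmap w x0 b sig x u - y = R.defect x - \<delta>"
      by (simp add: fun_eq_iff gmap_eq \<delta>_def)
    ultimately show ?thesis using R.nX_solution_diff_le[OF \<delta> x] by simp
  qed
  show ?thesis
    by (rule bexI[of _ "R.solution \<delta>"]) (use solves bound R.solution_prodX[OF \<delta>] in simp_all)
qed

lemma gmap_metric_regular:
  assumes V: "V \<subseteq> prodU M w N" and x: "x \<in> prodX M w N" and y: "y \<in> prodX M w N" and u: "u \<in> V"
  shows "distX M N (x, u) {(x', u'). x' \<in> prodX M w N \<and> u' \<in> V
      \<and> (\<forall>k\<le>N. AE \<omega> in M. gmap w x0 b sig x' u' k \<omega> = y k \<omega>)}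
    \<le> stability_constant N CARD('d) L * nX M N (gmap w x0 b sig x u - y)"
proof -
  obtain x' where x': "x' \<in> prodX M w N" "\<forall>k\<le>N. AE \<omega> in M. gmap w x0 b sig x' u k \<omega> = y k \<omega>"
    and bound: "nX M N (x - x') \<le> stability_constant N CARD('d) L * nX M N (gmap w x0 b sig x u - y)"
    using gmap_solvable_nearby[OF _ x y, of u x0] V u by blast
  have "distX M N (x, u) {(x', u'). x' \<in> prodX M w N \<and> u' \<in> V
      \<and> (\<forall>k\<le>N. AE \<omega> in M. gmap w x0 b sig x' u' k \<omega> = y k \<omega>)} \<le> nX M N (x - x') + nU M N (u - u)"
    using x' u by (intro distX_le[where x'=x' and u'=u]) simp
  with bound show ?thesis by (simp add: nU_def nrm_def)
qed

end

theorem lemma6p3: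
  fixes M :: "'a measure" and N :: nat
    and w :: "nat \<Rightarrow> 'a \<Rightarrow> real^'d"
    and x0 :: "real^'n"
    and b :: "nat \<Rightarrow> real^'n \<Rightarrow> real^'m \<Rightarrow> real^'n"
    and sig :: "nat \<Rightarrow> real^'n \<Rightarrow> real^'m \<Rightarrow> 'd \<Rightarrow> real^'n"
    and bx :: "nat \<Rightarrow> real^'n \<Rightarrow> real^'m \<Rightarrow> (real^'n) \<Rightarrow>\<^sub>L (real^'n)"
    and bu :: "nat \<Rightarrow> real^'n \<Rightarrow> real^'m \<Rightarrow> (real^'m) \<Rightarrow>\<^sub>L (real^'n)"
    and sx :: "nat \<Rightarrow> real^'n \<Rightarrow> real^'m \<Rightarrow> 'd \<Rightarrow> (real^'n) \<Rightarrow>\<^sub>L (real^'n)"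
    and su :: "nat \<Rightarrow> real^'n \<Rightarrow> real^'m \<Rightarrow> 'd \<Rightarrow> (real^'m) \<Rightarrow>\<^sub>L (real^'n)"
    and c1 :: real
  assumes P: "prob_space M"
    and w_meas: "\<And>k. k \<in> {1..N} \<Longrightarrow> w k \<in> borel_measurable M"
    and w_indep: "prob_space.indep_vars M (\<lambda>_. borel) w {1..N}"
    and w_coord_indep: "\<And>k. k \<in> {1..N} \<Longrightarrow> prob_space.indep_vars M (\<lambda>_. borel) (\<lambda>i \<omega>. w k \<omega> $ i) UNIV"
    and w_mean: "\<And>k i. k \<in> {1..N} \<Longrightarrow> integrable M (\<lambda>\<omega>. w k \<omega> $ i) \<and> (\<integral>\<omega>. w k \<omega> $ i \<partial>M) = 0"
    and w_var: "\<And>k i. k \<in> {1..N} \<Longrightarrow> integrable M (\<lambda>\<omega>. \<bar>w k \<omega> $ i\<bar>\<^sup>2) \<and> (\<integral>\<omega>. \<bar>w k \<omega> $ i\<bar>\<^sup>2 \<partial>M) = 1"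
    and b_deriv: "\<And>k x u. k < N \<Longrightarrow>
       ((\<lambda>(x', u'). b k x' u') has_derivative (\<lambda>(z, v). blinfun_apply (bx k x u) z + blinfun_apply (bu k x u) v)) (at (x, u))"
    and sig_deriv: "\<And>k x u i. k < N \<Longrightarrow>
       ((\<lambda>(x', u'). sig k x' u' i) has_derivative (\<lambda>(z, v). blinfun_apply (sx k x u i) z + blinfun_apply (su k x u i) v)) (at (x, u))"
    and b_C1: "\<And>k. k < N \<Longrightarrow> continuous_on UNIV (\<lambda>(x, u). bx k x u) \<and> continuous_on UNIV (\<lambda>(x, u). bu k x u)"
    and sig_C1: "\<And>k i. k < N \<Longrightarrow> continuous_on UNIV (\<lambda>(x, u). sx k x u i) \<and> continuous_on UNIV (\<lambda>(x, u). su k x u i)"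
    and b_growth: "\<And>k x u. k < N \<Longrightarrow> norm (b k x u) \<le> c1 * (1 + norm x + norm u)"
    and sig_growth: "\<And>k x u i. k < N \<Longrightarrow> norm (sig k x u i) \<le> c1 * (1 + norm x + norm u)"
    and b_lip: "\<And>k x u. k < N \<Longrightarrow> norm (bx k x u) + norm (bu k x u) \<le> c1"
    and sig_lip: "\<And>k x u i. k < N \<Longrightarrow> norm (sx k x u i) + norm (su k x u i) \<le> c1"
  shows "\<exists>c>0.
     (\<forall>x \<in> prodX M w N. \<forall>u \<in> prodU M w N. \<forall>\<delta> \<in> prodX M w N.
        \<exists>z \<in> prodX M w N.
          (\<forall>k\<le>N. AE \<omega> in M. Dg w bx bu sx su x u z (\<lambda>_ _. 0) k \<omega> = \<delta> k \<omega>)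
        \<and> (\<forall>z' \<in> prodX M w N.
             (\<forall>k\<le>N. AE \<omega> in M. Dg w bx bu sx su x u z' (\<lambda>_ _. 0) k \<omega> = \<delta> k \<omega>)
             \<longrightarrow> (\<forall>k\<le>N. AE \<omega> in M. z' k \<omega> = z k \<omega>))
        \<and> nX M N z \<le> c * nX M N \<delta>)
   \<and> (\<forall>V. V \<subseteq> prodU M w N \<and> closedU M w N V \<longrightarrow>
        (\<forall>x \<in> prodX M w N. \<forall>y \<in> prodX M w N. \<forall>u \<in> V.
           distX M N (x, u)
             {(x', u'). x' \<in> prodX M w N \<and> u' \<in> V
                \<and> (\<forall>k\<le>N. AE \<omega> in M. gmap w x0 b sig x' u' k \<omega> = y k \<omega>)}
           \<le> c * nX M N (gmap w x0 b sig x u - y)))"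
proof -
  have bx_bound: "norm (bx k x u) \<le> max c1 0" and sx_bound: "norm (sx k x u i) \<le> max c1 0"
    if "k < N" for k x u i
    using b_lip[OF that, of x u] sig_lip[OF that, of x u i] norm_ge_zero[of "bu k x u"]
      norm_ge_zero[of "su k x u i"] by linarith+
  have "noise M w N" using P w_meas w_indep w_var by (simp add: noise_def noise_axioms_def)
  then interpret controlled_system M w N b sig bx bu sx su c1 "max c1 0"
    by (rule controlled_system.intro)
      (simp add: controlled_system_axioms_def b_deriv sig_deriv b_C1 sig_C1 b_growth sig_growth bx_bound sx_bound)
  show ?thesis
    by (intro exI[of _ "stability_constant N CARD('d) (max c1 0)"] conjI stability_constant_pos
        ballI allI impI Dg_uniquely_solvable gmap_metric_regular) auto
qed

end
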